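(* Fix the hypervector dimension $d>0$ and the corresponding round number $J_d\ge1$. For each user $i\in\{1,\dots,U\}$ define $$t_i^{\max}(d)=\frac{T-\frac{Z_id+(J_d-1)G_id}{f_i^{\max}}}{J_d},$$ and for $t>0$ let $b_i^{\min}(t)=\inf\{b>0:\ t\,b\log_2(1+\frac{p_i^{\max}g_i}{N_0b})\ge N_id\}\in(0,\infty]$. Then the set of $(\boldsymbol t,\boldsymbol b,\boldsymbol p,\boldsymbol f)$ satisfying, for all $i$, $$\frac{Z_id+(J_d-1)G_id}{f_i}+J_dt_i\le T,\quad t_ib_i\log_2\!\Big(1+\frac{p_ig_i}{N_0b_i}\Big)\ge N_id,\quad\sum_{j=1}^Ub_j\le B,\quad 0\le p_i\le p_i^{\max},\quad 0<f_i\le f_i^{\max},\quad b_i>0,\quad t_i\ge0$$ is nonempty if and only if (1) $t_i^{\max}(d)>0$ for all $i$, and (2) $\sum_{i=1}^U b_i^{\min}\big(t_i^{\max}(d)\big)\le B$.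
   Context: $U$ users; $t_i,b_i,p_i,f_i$ are user $i$'s per-round transmission time, bandwidth, transmit power and CPU frequency, with limits $p_i^{\max}>0$, $f_i^{\max}>0$; $g_i>0$ the channel power gain, $N_0>0$ the noise power spectral density, $N_i>0$ the number of classes (payload $N_id$ bits), $B>0$ the total bandwidth, $T>0$ the total time budget; $Z_i=D_iC_i^{(\mathrm{init})}>0$ and $G_i=D_iC_i^{(\mathrm{ret})}\ge0$ the per-dimension CPU cycles for the first round and for each retraining round. *)

theory Defs
  imports "HOL-Analysis.Analysis"
begin

definition t_max :: "real \<Rightarrow> nat \<Rightarrow> real \<Rightarrow> real \<Rightarrow> nat \<Rightarrow> real \<Rightarrow> real" where
  "t_max T J Z G d fmax =
     (T - (Z * real d + (real J - 1) * G * real d) / fmax) / real J"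

text \<open>Minimal bandwidth for transmission time t, as an extended real
  (infimum of the empty set is +infinity).
  Arguments: p_i^max, g_i, N_0, payload N_i d, t.\<close>
definition b_min :: "real \<Rightarrow> real \<Rightarrow> real \<Rightarrow> real \<Rightarrow> real \<Rightarrow> ereal" where
  "b_min pmax g N0 payload t =
     Inf (ereal ` {b. b > 0 \<and> t * b * log 2 (1 + pmax * g / (N0 * b)) \<ge> payload})"

end

theory Submission
  imports Defs
begin

text \<open>The time budget only couples t_i with f_i and forces t_i \<le> t_i^max(d), with
  equality at f_i = f_i^max. The rate t b log_2(1 + p g / (N_0 b)) is monotone in t and p,
  so every feasible bandwidth b_i is also feasible for t_i^max(d) and p_i^max, whence
  b_i \<ge> b_i^min(t_i^max(d)). Conversely, the infimum defining b_i^min is attained whenever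
  it is finite: since ln(1 + x) \<le> 2 sqrt x, the rate is at most 2 t sqrt(b c) / ln 2, so
  feasible bandwidths stay away from 0, and away from 0 the feasible bandwidths form a closed
  set. These minimisers together with t_i^max, p_i^max and f_i^max give a feasible point.\<close>

lemma ln_one_plus_le_two_sqrt:
  fixes x :: real
  assumes "x \<ge> 0"
  shows "ln (1 + x) \<le> 2 * sqrt x"
proof -
  have "1 + x \<le> (1 + sqrt x)^2"
    using assms by (simp add: power2_eq_square algebra_simps)
  hence "ln (1 + x) \<le> ln ((1 + sqrt x)^2)"
    using assms by (subst ln_le_cancel_iff) auto
  also have "\<dots> = 2 * ln (1 + sqrt x)"
    using assms by (simp add: ln_realpow)
  also have "\<dots> \<le> 2 * sqrt x"
    using assms ln_add_one_self_le_self[of "sqrt x"] by simp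
  finally show ?thesis .
qed

lemma rate_le_sqrt:
  fixes t b c :: real
  assumes "t \<ge> 0" and "b > 0" and "c \<ge> 0"
  shows "t * b * log 2 (1 + c / b) \<le> 2 * t * sqrt (b * c) / ln 2"
proof -
  have "t * b * ln (1 + c / b) \<le> t * b * (2 * sqrt (c / b))"
    using ln_one_plus_le_two_sqrt[of "c / b"] assms by (intro mult_left_mono) auto
  also have "\<dots> = 2 * t * (b * sqrt (c / b))"
    by (simp add: ac_simps)
  also have "b * sqrt (c / b) = sqrt (b * c)"
    using assms(2) by (simp add: real_sqrt_divide real_sqrt_mult field_simps)
  finally show ?thesis
    by (simp add: log_def divide_right_mono)
qed

lemma bandwidth_lower_bound:
  fixes t b c P :: real
  assumes "t > 0" and "b > 0" and "c > 0" and "P > 0"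
    and "P \<le> t * b * log 2 (1 + c / b)"
  shows "(P * ln 2 / (2 * t))^2 / c \<le> b"
proof -
  have "P \<le> 2 * t * sqrt (b * c) / ln 2"
    using rate_le_sqrt[of t b c] assms by linarith
  hence "P * ln 2 / (2 * t) \<le> sqrt (b * c)"
    using assms(1) by (simp add: field_simps)
  hence "(P * ln 2 / (2 * t))^2 \<le> b * c"
    using power_mono[of "P * ln 2 / (2 * t)" "sqrt (b * c)" 2] assms by simp
  thus ?thesis
    using assms(3) by (simp add: divide_le_eq mult.commute)
qed

lemma feasible_bandwidth_has_min:
  fixes t c P :: real
  assumes "t > 0" and "c > 0" and "P > 0"
    and "\<exists>b>0. P \<le> t * b * log 2 (1 + c / b)"
  shows "\<exists>r>0. P \<le> t * r * log 2 (1 + c / r)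
           \<and> (\<forall>b>0. P \<le> t * b * log 2 (1 + c / b) \<longrightarrow> r \<le> b)"
proof -
  define rate where "rate b = t * b * log 2 (1 + c / b)" for b
  define \<delta> where "\<delta> = (P * ln 2 / (2 * t))^2 / c"
  define S where "S = {b. b > 0 \<and> P \<le> rate b}"
  have "\<delta> > 0"
    using assms by (simp add: \<delta>_def)
  have lower: "\<delta> \<le> b" if "b \<in> S" for b
    using that bandwidth_lower_bound[of t b c P] assms by (simp add: S_def rate_def \<delta>_def)
  have "continuous_on {\<delta>..} rate"
    unfolding rate_def using \<open>\<delta> > 0\<close> assms(2)
    by (intro continuous_intros) (auto simp: field_simps add_pos_pos)
  hence "closed {b \<in> {\<delta>..}. P \<le> rate b}"
    by (intro continuous_on_closed_Collect_le continuous_on_const) auto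
  moreover have "S = {b \<in> {\<delta>..}. P \<le> rate b}"
    using lower \<open>\<delta> > 0\<close> by (force simp: S_def)
  ultimately have "closed S"
    by simp
  moreover have "S \<noteq> {}" and "bdd_below S"
    using assms(4) lower by (auto simp: S_def rate_def bdd_below_def)
  ultimately have "Inf S \<in> S"
    using closure_contains_Inf closure_closed by metis
  moreover have "\<forall>b\<in>S. Inf S \<le> b"
    using \<open>bdd_below S\<close> by (simp add: cInf_lower)
  ultimately show ?thesis
    by (auto simp: S_def rate_def)
qed

lemma b_min_le:
  assumes "b > 0" and "P \<le> t * b * log 2 (1 + pmax * g / (N0 * b))"
  shows "b_min pmax g N0 P t \<le> ereal b"
  unfolding b_min_def using assms by (intro Inf_lower) auto

lemma b_min_attained:
  assumes "t > 0" and "pmax > 0" and "g > 0" and "N0 > 0" and "P > 0"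
    and "b_min pmax g N0 P t \<noteq> \<infinity>"
  shows "\<exists>r>0. P \<le> t * r * log 2 (1 + pmax * g / (N0 * r)) \<and> b_min pmax g N0 P t = ereal r"
proof -
  have ratio: "pmax * g / (N0 * b) = (pmax * g / N0) / b" for b
    by simp
  have "\<exists>b>0. P \<le> t * b * log 2 (1 + pmax * g / (N0 * b))"
  proof (rule ccontr)
    assume "\<not> ?thesis"
    hence "b_min pmax g N0 P t = Inf {}"
      unfolding b_min_def by (metis (no_types, lifting) empty_Collect_eq image_empty not_le)
    with assms(6) show False
      by (simp add: top_ereal_def)
  qed
  then obtain r where r: "r > 0" "P \<le> t * r * log 2 (1 + pmax * g / (N0 * r))"
    and least: "\<And>b. b > 0 \<Longrightarrow> P \<le> t * b * log 2 (1 + pmax * g / (N0 * b)) \<Longrightarrow> r \<le> b"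
    using feasible_bandwidth_has_min[of t "pmax * g / N0" P] assms unfolding ratio by auto
  have "b_min pmax g N0 P t = ereal r"
  proof (rule antisym)
    show "b_min pmax g N0 P t \<le> ereal r"
      using r by (rule b_min_le)
    show "ereal r \<le> b_min pmax g N0 P t"
      unfolding b_min_def using least by (intro Inf_greatest) auto
  qed
  with r show ?thesis
    by blast
qed

lemma t_max_budget:
  assumes "J \<ge> 1"
  shows "(Z * real d + (real J - 1) * G * real d) / fmax + real J * t_max T J Z G d fmax = T"
  using assms by (simp add: t_max_def)

lemma le_t_max:
  assumes "J \<ge> 1" and "Z \<ge> 0" and "G \<ge> 0" and "0 < f" and "f \<le> fmax"
    and "(Z * real d + (real J - 1) * G * real d) / f + real J * t \<le> T"
  shows "t \<le> t_max T J Z G d fmax"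
proof -
  have "(Z * real d + (real J - 1) * G * real d) / fmax
        \<le> (Z * real d + (real J - 1) * G * real d) / f"
    using assms by (intro divide_left_mono) auto
  hence "real J * t \<le> real J * t_max T J Z G d fmax"
    using assms(6) t_max_budget[OF assms(1), of Z d G fmax T] by linarith
  thus ?thesis
    using assms(1) by simp
qed

lemma rate_mono:
  fixes t t' b p p' g N0 :: real
  assumes "0 \<le> t" and "t \<le> t'" and "0 \<le> p" and "p \<le> p'" and "b > 0" and "g > 0" and "N0 > 0"
  shows "t * b * log 2 (1 + p * g / (N0 * b)) \<le> t' * b * log 2 (1 + p' * g / (N0 * b))"
proof -
  have "p * g / (N0 * b) \<le> p' * g / (N0 * b)"
    using assms by (intro divide_right_mono mult_right_mono) auto
  moreover have "0 \<le> p * g / (N0 * b)"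
    using assms by simp
  ultimately have "log 2 (1 + p * g / (N0 * b)) \<le> log 2 (1 + p' * g / (N0 * b))"
    and "0 \<le> log 2 (1 + p * g / (N0 * b))"
    by auto
  thus ?thesis
    using assms by (intro mult_mono) auto
qed

lemma feasible_imp_t_max_pos_b_min_le:
  assumes "J \<ge> 1" and "Z \<ge> 0" and "G \<ge> 0" and "g > 0" and "N0 > 0" and "P > 0"
    and "(Z * real d + (real J - 1) * G * real d) / f + real J * t \<le> T"
    and "P \<le> t * b * log 2 (1 + p * g / (N0 * b))"
    and "0 \<le> p" and "p \<le> pmax" and "0 < f" and "f \<le> fmax" and "b > 0" and "t \<ge> 0"
  shows "t_max T J Z G d fmax > 0 \<and> b_min pmax g N0 P (t_max T J Z G d fmax) \<le> ereal b"
proof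
  have "t \<le> t_max T J Z G d fmax"
    by (rule le_t_max[OF assms(1-3,11,12,7)])
  moreover have "t \<noteq> 0"
    using assms(6,8) by auto
  ultimately show "t_max T J Z G d fmax > 0"
    using assms(14) by linarith
  show "b_min pmax g N0 P (t_max T J Z G d fmax) \<le> ereal b"
  proof (rule b_min_le)
    have "t * b * log 2 (1 + p * g / (N0 * b))
          \<le> t_max T J Z G d fmax * b * log 2 (1 + pmax * g / (N0 * b))"
      using assms \<open>t \<le> t_max T J Z G d fmax\<close> by (intro rate_mono) auto
    thus "P \<le> t_max T J Z G d fmax * b * log 2 (1 + pmax * g / (N0 * b))"
      using assms(8) by linarith
  qed (rule assms(13))
qed

theorem proposition2:
  fixes U :: nat and d :: nat and J :: nat
    and pmax fmax g Z G :: "nat \<Rightarrow> real" and N :: "nat \<Rightarrow> nat"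
    and N0 B T :: real
  assumes "d > 0" and "J \<ge> 1"
    and "\<And>i. i \<in> {1..U} \<Longrightarrow> pmax i > 0"
    and "\<And>i. i \<in> {1..U} \<Longrightarrow> fmax i > 0"
    and "\<And>i. i \<in> {1..U} \<Longrightarrow> g i > 0"
    and "\<And>i. i \<in> {1..U} \<Longrightarrow> N i > 0"
    and "\<And>i. i \<in> {1..U} \<Longrightarrow> Z i > 0"
    and "\<And>i. i \<in> {1..U} \<Longrightarrow> G i \<ge> 0"
    and "N0 > 0" and "B > 0" and "T > 0"
  shows "(\<exists>t b p f :: nat \<Rightarrow> real.
            (\<forall>i\<in>{1..U}.
               (Z i * real d + (real J - 1) * G i * real d) / f i + real J * t i \<le> T
             \<and> t i * b i * log 2 (1 + p i * g i / (N0 * b i)) \<ge> real (N i) * real d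
             \<and> 0 \<le> p i \<and> p i \<le> pmax i
             \<and> 0 < f i \<and> f i \<le> fmax i
             \<and> b i > 0 \<and> t i \<ge> 0)
          \<and> (\<Sum>j\<in>{1..U}. b j) \<le> B)
     \<longleftrightarrow>
         ((\<forall>i\<in>{1..U}. t_max T J (Z i) (G i) d (fmax i) > 0)
          \<and> (\<Sum>i\<in>{1..U}. b_min (pmax i) (g i) N0 (real (N i) * real d)
                              (t_max T J (Z i) (G i) d (fmax i))) \<le> ereal B)"
  (is "(\<exists>t b p f. (\<forall>i\<in>{1..U}. ?user t b p f i) \<and> ?budget b)
        \<longleftrightarrow> (\<forall>i\<in>{1..U}. ?tm i > 0) \<and> sum ?bm {1..U} \<le> _")
proof
  have payload: "real (N i) * real d > 0" if "i \<in> {1..U}" for i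
    using assms(1,6) that by simp
  show "(\<forall>i\<in>{1..U}. ?tm i > 0) \<and> sum ?bm {1..U} \<le> ereal B"
    if "\<exists>t b p f. (\<forall>i\<in>{1..U}. ?user t b p f i) \<and> ?budget b"
  proof -
    from that obtain t b p f where user: "\<forall>i\<in>{1..U}. ?user t b p f i" and "?budget b"
      by blast
    have per_user: "?tm i > 0 \<and> ?bm i \<le> ereal (b i)" if "i \<in> {1..U}" for i
      using user assms(2,5,7-9) payload that
      by (intro feasible_imp_t_max_pos_b_min_le[where f = "f i" and p = "p i" and t = "t i"])
        (auto intro: less_imp_le)
    have "sum ?bm {1..U} \<le> (\<Sum>i\<in>{1..U}. ereal (b i))"
      using per_user by (intro sum_mono) auto
    also have "\<dots> \<le> ereal B"
      using \<open>?budget b\<close> by simp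
    finally show ?thesis
      using per_user by blast
  qed
  show "\<exists>t b p f. (\<forall>i\<in>{1..U}. ?user t b p f i) \<and> ?budget b"
    if conditions: "(\<forall>i\<in>{1..U}. ?tm i > 0) \<and> sum ?bm {1..U} \<le> ereal B"
  proof -
    have "\<forall>i\<in>{1..U}. \<exists>r>0. real (N i) * real d \<le> ?tm i * r * log 2 (1 + pmax i * g i / (N0 * r))
            \<and> ?bm i = ereal r" (is "\<forall>i\<in>{1..U}. ?attained i")
    proof
      fix i assume i: "i \<in> {1..U}"
      have "?bm i \<noteq> \<infinity>"
        using conditions i sum_Pinfty[of ?bm "{1..U}"] by auto
      then show "?attained i"
        using assms(3,5,9) conditions payload i by (intro b_min_attained) auto
    qed
    from bchoice[OF this] obtain b where b: "\<forall>i\<in>{1..U}. b i > 0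
        \<and> real (N i) * real d \<le> ?tm i * b i * log 2 (1 + pmax i * g i / (N0 * b i))
        \<and> ?bm i = ereal (b i)"
      by blast
    have "ereal (\<Sum>i\<in>{1..U}. b i) = (\<Sum>i\<in>{1..U}. ereal (b i))"
      by simp
    also have "\<dots> = sum ?bm {1..U}"
      using b by (intro sum.cong) auto
    also have "\<dots> \<le> ereal B"
      using conditions by blast
    finally have "?budget b"
      by simp
    moreover have "\<forall>i\<in>{1..U}. ?user ?tm b pmax fmax i"
      using b conditions assms(3,4) t_max_budget[OF assms(2)] by (auto intro: less_imp_le)
    ultimately show ?thesis
      by (intro exI[of _ ?tm] exI[of _ b] exI[of _ pmax] exI[of _ fmax] conjI)
  qed
qed

end
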